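(* Let $Y$ be the quotient of $(\mathbb R_{>0})^s\times E$ by a non-degenerate twisted diagonal action of $G=\mathbb Z^s\ltimes\mathcal L$ with data $(\xi_1,\dots,\xi_s)$, $\mathcal L$, $(A_1,\dots,A_s)$, and let $\mu_i\in GL(k,\mathbb Z)$ be the matrix of $A_i$ in the basis $\mathcal B$. Then (1) there is a fibration $p:Y\to\mathbb T^s$ with fiber $\mathbb T^k$ and monodromy matrices $\mu_1,\dots,\mu_s$; (2) this fibration admits a cross-section.
   Context: $E$ is a real vector space of dimension $k$ with basis $\mathcal B$; $\mathcal L$ is the free abelian group generated by $\mathcal B$. $\xi_1,\dots,\xi_s\in(\mathbb R_{>0})^s$, $\xi_i=(\xi_i^{(1)},\dots,\xi_i^{(s)})$; $A_1,\dots,A_s\in GL(E)$ commute pairwise and each restricts to an automorphism of $\mathcal L$. $G=\mathbb Z^s\ltimes\mathcal L$ with the $i$-th generator $\tau_i$ acting on $\mathcal L$ by $A_i$. The twisted diagonal action on $(\mathbb R_{>0})^s\times E$: $\mathcal L$ acts by translations on $E$, and $\tau_i(x_1,\dots,x_s,v)=(\xi_i^{(1)}x_1,\dots,\xi_i^{(s)}x_s,A_i(v))$. Non-degenerate means the vectors $(\log\xi_i^{(1)},\dots,\log\xi_i^{(s)})$, $1\le i\le s$, form a basis of $\mathbb R^s$. *)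

theory Defs
  imports "HOL-Analysis.Analysis"
begin

text \<open>Coordinates: E is identified with real^'k via the basis B (indexed by the finite type 'k),
  so L = integer vectors, and A_i is the real matrix with integer entries mu_i.
  The index set {1..s} is the finite type 's.\<close>

definition rmat :: "int^'k^'k \<Rightarrow> real^'k^'k" where
  "rmat M = (\<chi> a b. real_of_int (M $ a $ b))"

definition rvec :: "int^'k \<Rightarrow> real^'k" where
  "rvec l = (\<chi> a. real_of_int (l $ a))"

definition posE :: "((real^'s) \<times> (real^'k)) set" where
  "posE = {(x, v). \<forall>j. 0 < x $ j}"

definition tau :: "('s \<Rightarrow> real^'s) \<Rightarrow> ('s \<Rightarrow> int^'k^'k) \<Rightarrow> 's
                   \<Rightarrow> (real^'s) \<times> (real^'k) \<Rightarrow> (real^'s) \<times> (real^'k)" where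
  "tau \<xi> \<mu> i p = ((\<chi> j. \<xi> i $ j * fst p $ j), rmat (\<mu> i) *v snd p)"

text \<open>One-step relation given by the generators of G = Z^s \<ltimes> L acting on (R_{>0})^s x E;
  its equivalence closure is the orbit relation of G.\<close>
definition twisted_gen :: "('s \<Rightarrow> real^'s) \<Rightarrow> ('s \<Rightarrow> int^'k^'k)
     \<Rightarrow> (real^'s) \<times> (real^'k) \<Rightarrow> (real^'s) \<times> (real^'k) \<Rightarrow> bool" where
  "twisted_gen \<xi> \<mu> p q \<longleftrightarrow> p \<in> posE \<and>
     ((\<exists>i. q = tau \<xi> \<mu> i p) \<or> (\<exists>l::int^'k. q = (fst p, snd p + rvec l)))"

definition twisted_orbit_rel where
  "twisted_orbit_rel \<xi> \<mu> = equivclp (twisted_gen \<xi> \<mu>)"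

definition nondegenerate :: "('s \<Rightarrow> real^'s) \<Rightarrow> bool" where
  "nondegenerate \<xi> \<longleftrightarrow>
     (let L = (\<lambda>i. \<chi> j. ln (\<xi> i $ j)) in inj L \<and> independent (range L) \<and> span (range L) = UNIV)"

text \<open>The torus T^s, realised as a product of unit circles in complex^'s, with the
  covering map R^s \<rightarrow> T^s.\<close>
definition texp :: "real^'s \<Rightarrow> complex^'s" where
  "texp t = (\<chi> i. cis (2 * pi * t $ i))"

definition torus :: "(complex^'s) topology" where
  "torus = subtopology euclidean (range texp)"

text \<open>The standard (flat) T^k-bundle over T^s with monodromy matrices mu_1,...,mu_s:
  the quotient of R^s x R^k by (t,v) ~ (t + e_i, mu_i v) and (t,v) ~ (t, v + l), l in Z^k,
  projecting to T^s via [t,v] |-> texp t.\<close>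
definition model_gen :: "('s \<Rightarrow> int^'k^'k)
     \<Rightarrow> (real^'s) \<times> (real^'k) \<Rightarrow> (real^'s) \<times> (real^'k) \<Rightarrow> bool" where
  "model_gen \<mu> p q \<longleftrightarrow>
     (\<exists>i. q = (fst p + axis i 1, rmat (\<mu> i) *v snd p)) \<or> (\<exists>l::int^'k. q = (fst p, snd p + rvec l))"

definition model_rel where
  "model_rel \<mu> = equivclp (model_gen \<mu>)"

text \<open>p : Y \<rightarrow> T^s is a fibration with fiber T^k and monodromy matrices mu_i: it is isomorphic
  over T^s to the standard bundle above, i.e. there is a quotient map Q : R^s x R^k \<rightarrow> Y whose
  fibres are exactly the classes of model_rel and with p (Q (t,v)) = texp t.\<close>
definition torus_fibration_with_monodromy ::
  "'y topology \<Rightarrow> ('y \<Rightarrow> complex^'s) \<Rightarrow> ('s \<Rightarrow> int^'k^'k) \<Rightarrow> bool" where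
  "torus_fibration_with_monodromy Y p \<mu> \<longleftrightarrow>
     continuous_map Y torus p \<and>
     (\<exists>Q :: (real^'s) \<times> (real^'k) \<Rightarrow> 'y.
        quotient_map euclidean Y Q \<and>
        (\<forall>a b. Q a = Q b \<longleftrightarrow> model_rel \<mu> a b) \<and>
        (\<forall>t v. p (Q (t, v)) = texp t))"

definition has_cross_section :: "'y topology \<Rightarrow> ('y \<Rightarrow> complex^'s) \<Rightarrow> bool" where
  "has_cross_section Y p \<longleftrightarrow>
     (\<exists>\<sigma>. continuous_map torus Y \<sigma> \<and> (\<forall>z\<in>topspace torus. p (\<sigma> z) = z))"

end

theory Submission
  imports Defs
begin

text \<open>In the logarithmic coordinates \<open>x = exp (\<Sum>i. t\<^sub>i log \<xi>\<^sub>i)\<close>, which identify \<open>\<real>\<^sup>s\<close> with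
  \<open>(\<real>\<^sub>>\<^sub>0)\<^sup>s\<close> exactly because the vectors \<open>log \<xi>\<^sub>i\<close> form a basis, the generator \<open>\<tau>\<^sub>i\<close> becomes the
  unit translation \<open>t \<mapsto> t + e\<^sub>i\<close> in the base combined with \<open>A\<^sub>i\<close> in the fibre. Hence \<open>Y\<close> is the
  flat \<open>T\<^sup>k\<close>-bundle over \<open>T\<^sup>s = \<real>\<^sup>s/\<int>\<^sup>s\<close> with monodromies \<open>\<mu>\<^sub>i\<close>, projecting by \<open>[t, v] \<mapsto> [t]\<close>.
  Since every \<open>\<mu>\<^sub>i\<close> fixes the origin of the fibre, \<open>[t] \<mapsto> [t, 0]\<close> is a well-defined
  continuous section.\<close>

lemma equivclp_map:
  assumes "equivclp r x y" and "\<And>a b. r a b \<Longrightarrow> r' (f a) (f b)"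
  shows "equivclp r' (f x) (f y)"
  using assms(1)
proof (induction rule: equivclp_induct)
  case base
  show ?case by simp
next
  case (step y z)
  then show ?case by (meson assms(2) equivclp_into_equivclp)
qed

lemma equivclp_map_iff:
  assumes "\<And>a b. r a b \<Longrightarrow> r' (f a) (f b)" and "\<And>a b. r' a b \<Longrightarrow> r (g a) (g b)"
    and "\<And>a. g (f a) = a"
  shows "equivclp r' (f x) (f y) \<longleftrightarrow> equivclp r x y"
  by (metis assms equivclp_map)

lemma cis_2pi_eq_iff: "cis (2 * pi * a) = cis (2 * pi * b) \<longleftrightarrow> (\<exists>m::int. b = a + m)"
proof -
  have "cis (2 * pi * a) = cis (2 * pi * b) \<longleftrightarrow> (\<exists>m::int. 2 * pi * b = 2 * pi * a + 2 * pi * m)"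
    unfolding complex_eq_iff sin_cos_eq_iff [symmetric] by auto
  also have "\<dots> \<longleftrightarrow> (\<exists>m::int. b = a + m)"
    by (simp flip: distrib_left)
  finally show ?thesis .
qed

lemma texp_eq_iff: "texp t = texp t' \<longleftrightarrow> (\<exists>n. t' = t + rvec n)"
proof -
  have "texp t = texp t' \<longleftrightarrow> (\<forall>i. \<exists>m::int. t' $ i = t $ i + m)"
    by (simp add: texp_def vec_eq_iff cis_2pi_eq_iff)
  also have "\<dots> \<longleftrightarrow> (\<exists>n. t' = t + rvec n)"
    unfolding choice_iff vec_eq_iff by (simp add: rvec_def) (metis vec_lambda_beta)
  finally show ?thesis .
qed

lemma texp_add_axis: "texp (t + axis i 1) = texp t"
proof -
  have "t + axis i 1 = t + rvec (axis i 1)"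
    by (simp add: vec_eq_iff rvec_def axis_def)
  then have "texp t = texp (t + axis i 1)"
    unfolding texp_eq_iff by blast
  then show ?thesis by (rule sym)
qed

lemma continuous_map_texp: "continuous_map euclidean torus texp"
proof -
  have "continuous_on UNIV texp"
    unfolding texp_def by (intro continuous_intros)
  then show ?thesis
    unfolding torus_def by (intro continuous_map_into_subtopology) auto
qed

lemma texp_cbox_01: "texp ` cbox 0 1 = range texp"
proof -
  have "texp t \<in> texp ` cbox 0 1" for t
  proof
    have "t = (\<chi> i. frac (t $ i)) + rvec (\<chi> i. \<lfloor>t $ i\<rfloor>)"
      by (simp add: vec_eq_iff rvec_def frac_def)
    then have "texp (\<chi> i. frac (t $ i)) = texp t"
      unfolding texp_eq_iff by blast
    then show "texp t = texp (\<chi> i. frac (t $ i))" by simp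
    show "(\<chi> i. frac (t $ i)) \<in> cbox 0 1"
      by (simp add: mem_box_cart frac_lt_1 less_imp_le)
  qed
  then show ?thesis by blast
qed

lemma quotient_map_texp_cbox: "quotient_map (top_of_set (cbox 0 1)) torus texp"
proof (rule continuous_imp_quotient_map)
  show "continuous_map (top_of_set (cbox 0 1)) torus texp"
    by (rule continuous_map_from_subtopology[OF continuous_map_texp])
  show "compact_space (top_of_set (cbox (0::real^'s) 1))"
    by (simp add: compact_space_subtopology compactin_euclidean_iff)
  show "Hausdorff_space torus"
    unfolding torus_def by (rule Hausdorff_space_subtopology) simp
  show "texp ` topspace (top_of_set (cbox 0 1)) = topspace torus"
    by (simp add: torus_def texp_cbox_01)
qed

lemma model_rel_trans [trans]: "model_rel \<mu> a b \<Longrightarrow> model_rel \<mu> b c \<Longrightarrow> model_rel \<mu> a c"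
  unfolding model_rel_def by (rule equivclp_trans)

lemma model_rel_sym [sym]: "model_rel \<mu> a b \<Longrightarrow> model_rel \<mu> b a"
  unfolding model_rel_def by (rule equivclp_sym)

lemma model_gen_imp_model_rel: "model_gen \<mu> a b \<Longrightarrow> model_rel \<mu> a b"
  unfolding model_rel_def by (rule r_into_equivclp)

lemma model_rel_translate_axis: "model_rel \<mu> (t, 0) (t + of_int m *\<^sub>R axis i 1, 0)"
proof (induction m rule: int_induct [where k = 0])
  case base
  show ?case by (simp add: model_rel_def)
next
  case (step1 m)
  note step1.IH
  also have "model_rel \<mu> (t + of_int m *\<^sub>R axis i 1, 0) (t + of_int (m + 1) *\<^sub>R axis i 1, 0)"
    by (rule model_gen_imp_model_rel) (auto simp: model_gen_def algebra_simps)
  finally show ?case .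
next
  case (step2 m)
  note step2.IH
  also have "model_rel \<mu> (t + of_int m *\<^sub>R axis i 1, 0) (t + of_int (m - 1) *\<^sub>R axis i 1, 0)"
    by (rule model_rel_sym, rule model_gen_imp_model_rel) (auto simp: model_gen_def algebra_simps)
  finally show ?case .
qed

lemma model_rel_translate_lattice: "model_rel \<mu> (t, 0) (t + rvec n, 0)"
proof -
  have "model_rel \<mu> (t, 0) (t + (\<Sum>i\<in>I. of_int (n $ i) *\<^sub>R axis i 1), 0)" for I t
    using finite [of I]
  proof (induction I arbitrary: t rule: finite_induct)
    case empty
    show ?case by (simp add: model_rel_def)
  next
    case (insert i I)
    let ?s = "of_int (n $ i) *\<^sub>R axis i 1"
    have "model_rel \<mu> (t, 0) (t + ?s + (\<Sum>i\<in>I. of_int (n $ i) *\<^sub>R axis i 1), 0)"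
      using model_rel_translate_axis insert.IH by (rule model_rel_trans)
    moreover have "t + ?s + (\<Sum>i\<in>I. of_int (n $ i) *\<^sub>R axis i 1)
        = t + (\<Sum>i\<in>insert i I. of_int (n $ i) *\<^sub>R axis i 1)"
      using insert.hyps by (simp add: add.assoc)
    ultimately show ?case
      by (simp only:)
  qed
  moreover have "(\<Sum>i\<in>UNIV. of_int (n $ i) *\<^sub>R axis i 1) = rvec n"
    using basis_expansion [of "rvec n"] by (simp add: rvec_def scalar_mult_eq_scaleR)
  ultimately show ?thesis by metis
qed

lemma model_rel_texp_fst: "model_rel \<mu> a b \<Longrightarrow> texp (fst a) = texp (fst b)"
  unfolding model_rel_def
proof (induction rule: equivclp_induct)
  case base
  show ?case by simp
next
  case (step y z)
  then show ?case by (auto simp: model_gen_def texp_add_axis)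
qed

definition log_frame :: "('s::finite \<Rightarrow> real^'s) \<Rightarrow> real^'s \<Rightarrow> real^'s" where
  "log_frame \<xi> t = (\<Sum>i\<in>UNIV. t $ i *\<^sub>R (\<chi> j. ln (\<xi> i $ j)))"

lemma linear_log_frame: "linear (log_frame \<xi>)"
  unfolding log_frame_def
  by (rule linearI) (simp_all add: sum.distrib scaleR_add_left scaleR_sum_right)

lemma log_frame_add_axis: "log_frame \<xi> (t + axis i 1) = log_frame \<xi> t + (\<chi> j. ln (\<xi> i $ j))"
proof -
  have "log_frame \<xi> (axis i 1) = (\<Sum>k\<in>UNIV. if k = i then (\<chi> j. ln (\<xi> k $ j)) else 0)"
    unfolding log_frame_def by (rule sum.cong) (auto simp: axis_def)
  then show ?thesis
    by (simp add: linear_add [OF linear_log_frame] sum.delta')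
qed

lemma surj_log_frame:
  assumes "nondegenerate \<xi>"
  shows "surj (log_frame \<xi>)"
proof -
  define L where "L i = (\<chi> j. ln (\<xi> i $ j))" for i
  have inj: "inj L" and span: "span (range L) = UNIV"
    using assms unfolding nondegenerate_def L_def Let_def by auto
  have "w \<in> range (log_frame \<xi>)" for w
  proof -
    obtain u where "w = (\<Sum>v\<in>range L. u v *\<^sub>R v)"
      using span span_finite [of "range L"] by auto
    also have "\<dots> = (\<Sum>i\<in>UNIV. u (L i) *\<^sub>R L i)"
      using sum.reindex [OF inj, of "\<lambda>v. u v *\<^sub>R v"] by simp
    also have "\<dots> = log_frame \<xi> (\<chi> i. u (L i))"
      by (simp add: log_frame_def L_def)
    finally show ?thesis by blast
  qed
  then show ?thesis by blast
qed

definition exp_chart :: "('s::finite \<Rightarrow> real^'s) \<Rightarrow> (real^'s) \<times> (real^'k) \<Rightarrow> (real^'s) \<times> (real^'k)" where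
  "exp_chart \<xi> = (\<lambda>(t, v). ((\<chi> j. exp (log_frame \<xi> t $ j)), v))"

lemma exp_chart_in_posE: "exp_chart \<xi> a \<in> posE"
  by (auto simp: exp_chart_def posE_def split: prod.splits)

lemma continuous_on_exp_chart:
  fixes \<xi> :: "'s::finite \<Rightarrow> real^'s"
  shows "continuous_on UNIV (exp_chart \<xi> :: _ \<Rightarrow> (real^'s) \<times> (real^'k))"
proof -
  have "continuous_on UNIV (\<lambda>z::(real^'s) \<times> (real^'k). log_frame \<xi> (fst z))"
    using linear_continuous_on_compose [OF continuous_on_fst [OF continuous_on_id] linear_log_frame] .
  then show ?thesis
    unfolding exp_chart_def case_prod_beta
    by (intro continuous_on_Pair continuous_on_vec_lambda continuous_on_exp continuous_on_component
        continuous_on_snd continuous_on_id)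
qed

lemma homeomorphic_map_exp_chart:
  fixes \<xi> :: "'s::finite \<Rightarrow> real^'s"
  assumes "nondegenerate \<xi>"
  shows "homeomorphic_map euclidean (top_of_set posE) (exp_chart \<xi> :: _ \<Rightarrow> (real^'s) \<times> (real^'k))"
proof -
  obtain G where linG: "linear G" and GF: "\<And>t. G (log_frame \<xi> t) = t"
    and FG: "\<And>x. log_frame \<xi> (G x) = x"
    using linear_surjective_isomorphism [OF linear_log_frame surj_log_frame [OF assms]] by blast
  define \<psi> where "\<psi> = (\<lambda>(x::real^'s, v::real^'k). (G (\<chi> j. ln (x $ j)), v))"
  have "continuous_on posE (\<lambda>z::(real^'s) \<times> (real^'k). \<chi> j. ln (fst z $ j))"
    by (intro continuous_on_vec_lambda continuous_on_ln continuous_on_component continuous_on_fst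
        continuous_on_id) (auto simp: posE_def, metis less_irrefl)
  then have "continuous_on posE \<psi>"
    unfolding \<psi>_def case_prod_beta
    by (intro continuous_on_Pair linear_continuous_on_compose [OF _ linG] continuous_on_snd
        continuous_on_id)
  moreover have "\<psi> (exp_chart \<xi> a) = a" for a
    by (cases a) (simp add: exp_chart_def \<psi>_def GF)
  moreover have "exp_chart \<xi> (\<psi> p) = p" if "p \<in> posE" for p
    using that by (cases p) (simp add: exp_chart_def \<psi>_def FG posE_def vec_eq_iff)
  ultimately have "homeomorphic_maps euclidean (top_of_set posE) (exp_chart \<xi>) \<psi>"
    unfolding homeomorphic_maps_def
    by (auto intro!: continuous_map_into_subtopology continuous_on_exp_chart exp_chart_in_posE)
  then show ?thesis
    using homeomorphic_map_maps by blast
qed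

lemma tau_exp_chart:
  assumes "\<And>j. 0 < \<xi> i $ j"
  shows "tau \<xi> \<mu> i (exp_chart \<xi> (t, v)) = exp_chart \<xi> (t + axis i 1, rmat (\<mu> i) *v v)"
  using assms by (simp add: tau_def exp_chart_def log_frame_add_axis exp_add vec_eq_iff)

lemma exp_chart_translate:
  "exp_chart \<xi> (t, v + w) = (fst (exp_chart \<xi> (t, v)), snd (exp_chart \<xi> (t, v)) + w)"
  by (simp add: exp_chart_def)

lemma twisted_orbit_rel_exp_chart_iff:
  fixes \<xi> :: "'s::finite \<Rightarrow> real^'s" and \<mu> :: "'s \<Rightarrow> int^'k::finite^'k"
  assumes "\<And>i j. 0 < \<xi> i $ j" and "nondegenerate \<xi>"
  shows "twisted_orbit_rel \<xi> \<mu> (exp_chart \<xi> a) (exp_chart \<xi> b) \<longleftrightarrow> model_rel \<mu> a b"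
  unfolding twisted_orbit_rel_def model_rel_def
proof (rule equivclp_map_iff)
  let ?f = "exp_chart \<xi> :: _ \<Rightarrow> (real^'s) \<times> (real^'k)"
  have "homeomorphic_map euclidean (top_of_set posE) ?f"
    using assms(2) by (rule homeomorphic_map_exp_chart)
  then have "inj ?f" and "range ?f = posE"
    using homeomorphic_imp_injective_map homeomorphic_imp_surjective_map by fastforce+
  then have f_inv: "?f (inv ?f p) = p" if "p \<in> posE" for p
    using that by (simp add: f_inv_into_f)
  show "inv ?f (?f a) = a" for a
    using \<open>inj ?f\<close> by simp
  show "twisted_gen \<xi> \<mu> (?f a) (?f b)" if "model_gen \<mu> a b" for a b
    using that assms(1)
    by (cases a) (auto simp: model_gen_def twisted_gen_def exp_chart_in_posE tau_exp_chart
        exp_chart_translate)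
  show "model_gen \<mu> (inv ?f p) (inv ?f r)" if "twisted_gen \<xi> \<mu> p r" for p r
  proof -
    obtain t v where tv: "inv ?f p = (t, v)" by fastforce
    have p: "p = ?f (t, v)"
      using that f_inv [of p] tv by (simp add: twisted_gen_def)
    from that consider i where "r = tau \<xi> \<mu> i p" | l where "r = (fst p, snd p + rvec l)"
      unfolding twisted_gen_def by blast
    then show ?thesis
    proof cases
      case (1 i)
      then have "r = ?f (t + axis i 1, rmat (\<mu> i) *v v)"
        using p assms(1) by (simp add: tau_exp_chart)
      then show ?thesis
        using \<open>inj ?f\<close> tv by (auto simp: model_gen_def)
    next
      case (2 l)
      then have "r = ?f (t, v + rvec l)"
        using p by (simp add: exp_chart_translate)
      then show ?thesis
        using \<open>inj ?f\<close> tv by (auto simp: model_gen_def)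
    qed
  qed
qed

lemma model_quotient_fibration_with_section:
  fixes Q :: "(real^'s::finite) \<times> (real^'k::finite) \<Rightarrow> 'y"
  assumes quot: "quotient_map euclidean Y Q" and fibres: "\<And>a b. Q a = Q b \<longleftrightarrow> model_rel \<mu> a b"
  shows "\<exists>p. torus_fibration_with_monodromy Y p \<mu> \<and> has_cross_section Y p"
proof -
  let ?base = "texp \<circ> (fst :: (real^'s) \<times> (real^'k) \<Rightarrow> _)"
  have "continuous_map euclidean euclidean (fst :: (real^'s) \<times> (real^'k) \<Rightarrow> _)"
    by (simp add: continuous_on_fst)
  then have "continuous_map euclidean torus ?base"
    using continuous_map_texp by (rule continuous_map_compose)
  then obtain p where cont_p: "continuous_map Y torus p" and pQ: "\<And>a. p (Q a) = texp (fst a)"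
  proof (rule quotient_map_lift_exists [OF quot])
    show "?base a = ?base b" if "Q a = Q b" for a b
      using that fibres model_rel_texp_fst by simp
    fix g assume "continuous_map Y torus g" and "\<And>a. a \<in> topspace euclidean \<Longrightarrow> g (Q a) = ?base a"
    then show thesis
      using that by simp
  qed
  let ?zero_section = "Q \<circ> (\<lambda>t. (t, 0))"
  have "continuous_map euclidean euclidean (\<lambda>t::real^'s. (t, 0::real^'k))"
    by (simp add: continuous_on_Pair)
  then have "continuous_map (top_of_set (cbox 0 1)) Y ?zero_section"
    using quotient_imp_continuous_map [OF quot]
    by (intro continuous_map_from_subtopology) (rule continuous_map_compose)
  then obtain \<sigma> where cont_\<sigma>: "continuous_map torus Y \<sigma>"
    and \<sigma>_texp: "\<And>t. t \<in> cbox 0 1 \<Longrightarrow> \<sigma> (texp t) = Q (t, 0)"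
  proof (rule quotient_map_lift_exists [OF quotient_map_texp_cbox])
    show "?zero_section t = ?zero_section t'" if "texp t = texp t'" for t t'
      using that model_rel_translate_lattice fibres by (auto simp: texp_eq_iff)
    fix g assume "continuous_map torus Y g"
      and "\<And>t. t \<in> topspace (top_of_set (cbox 0 1)) \<Longrightarrow> g (texp t) = ?zero_section t"
    then show thesis
      using that by simp
  qed
  have "p (\<sigma> z) = z" if "z \<in> topspace torus" for z
  proof -
    have "z \<in> texp ` cbox 0 1"
      using that by (simp add: torus_def texp_cbox_01)
    then obtain t where "t \<in> cbox 0 1" and "z = texp t"
      by blast
    then show ?thesis by (simp add: \<sigma>_texp pQ)
  qed
  then have "has_cross_section Y p"
    unfolding has_cross_section_def using cont_\<sigma> by blast
  moreover have "torus_fibration_with_monodromy Y p \<mu>"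
    unfolding torus_fibration_with_monodromy_def using cont_p quot fibres pQ by auto
  ultimately show ?thesis by blast
qed

theorem proposition2p5:
  fixes \<xi> :: "'s::finite \<Rightarrow> real^'s"
    and \<mu> :: "'s \<Rightarrow> int^'k::finite^'k"
    and Y :: "'y topology"
    and q :: "(real^'s) \<times> (real^'k) \<Rightarrow> 'y"
  assumes xi_pos: "\<And>i j. 0 < \<xi> i $ j"
    and mu_GL: "\<And>i. is_unit (det (\<mu> i))"
    and mu_comm: "\<And>i j. \<mu> i ** \<mu> j = \<mu> j ** \<mu> i"
    and nondeg: "nondegenerate \<xi>"
    and quot: "quotient_map (subtopology euclidean posE) Y q"
    and fibres: "\<And>a b. a \<in> posE \<Longrightarrow> b \<in> posE \<Longrightarrow> (q a = q b \<longleftrightarrow> twisted_orbit_rel \<xi> \<mu> a b)"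
  shows "\<exists>p. torus_fibration_with_monodromy Y p \<mu> \<and> has_cross_section Y p"
proof (rule model_quotient_fibration_with_section)
  let ?Q = "q \<circ> exp_chart \<xi>"
  show "quotient_map euclidean Y ?Q"
    using homeomorphic_map_exp_chart [OF nondeg] quot
    by (auto simp: homeomorphic_map_def intro: quotient_map_compose)
  show "?Q a = ?Q b \<longleftrightarrow> model_rel \<mu> a b" for a b
    using fibres [OF exp_chart_in_posE exp_chart_in_posE]
      twisted_orbit_rel_exp_chart_iff [OF xi_pos nondeg] by simp
qed

end
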